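(* Let $a,b$ be integers with $0<a<b$. Let $\Gamma_{a,b}=\{\gamma_1,\gamma_2,\gamma_3,\dots\}$ be the sequence produced by the greedy algorithm: $\gamma_1=a$, $\gamma_2=b$, and for $r\ge 3$, $\gamma_r$ is the smallest integer greater than $\gamma_{r-1}$ such that $\{\gamma_1,\dots,\gamma_r\}$ is dissociated. Then there is an integer $n_0=n_0(a,b)$ such that $\gamma_n = 2\gamma_{n-1}$ for all $n\ge n_0$.
   Context: A set $\mathcal S\subseteq\mathbb N$ is dissociated if all of its finite subsets have different sums; equivalently, any equality $\sum_{s\in\mathcal S}\varepsilon_s s=0$ with $\varepsilon_s\in\{-1,0,1\}$ and only finitely many $\varepsilon_s\neq 0$ forces all $\varepsilon_s=0$. *)

theory Defs
  imports Main
begin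

definition dissociated :: "nat set \<Rightarrow> bool" where
  "dissociated S \<longleftrightarrow>
     (\<forall>A B. A \<subseteq> S \<longrightarrow> B \<subseteq> S \<longrightarrow> finite A \<longrightarrow> finite B \<longrightarrow> \<Sum>A = \<Sum>B \<longrightarrow> A = B)"

fun greedy_list :: "nat \<Rightarrow> nat \<Rightarrow> nat \<Rightarrow> nat list" where
  "greedy_list a b 0 = [a, b]"
| "greedy_list a b (Suc n) =
     (let L = greedy_list a b n
      in L @ [LEAST x. last L < x \<and> dissociated (insert x (set L))])"

text \<open>gamma a b r is the r-th term (1-indexed, r \<ge> 1) of the greedy sequence.\<close>
definition gamma :: "nat \<Rightarrow> nat \<Rightarrow> nat \<Rightarrow> nat" where
  "gamma a b r = greedy_list a b r ! (r - 1)"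

end

theory Submission
  imports Defs
begin

(*
  Let D(S) be the set of differences \<Sum>A - \<Sum>B \<ge> 0 of finite subsets A, B of S. A new element
  x can be added to a dissociated set S exactly when x \<notin> D(S), so the greedy term following
  gamma_k is the least integer above gamma_k outside D(T), where T = {gamma_1, ..., gamma_k}.
  Hence D(T) contains [b, gamma_(k+1)), and using gamma_k - j for small j also [0, gamma_k - b].
  Once gamma_k \<ge> 2b this gives [0, gamma_(k+1)) \<subseteq> D(T), a property that propagates: if
  [0, y) \<subseteq> D(T) then [0, 2y) \<subseteq> D(T \<union> {y}). So from then on the sequence at least doubles,
  and the sum of all earlier terms is eventually less than twice the last term y. Then 2y is
  not in D(T \<union> {y}) (a representation would force y \<in> D(T)), so the next term is exactly 2y.
*)

definition sum_diffs :: "nat set \<Rightarrow> nat set" where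
  "sum_diffs S = {k. \<exists>A B. A \<subseteq> S \<and> B \<subseteq> S \<and> finite A \<and> finite B \<and> \<Sum>A = k + \<Sum>B}"

lemma sum_diffsI:
  "A \<subseteq> S \<Longrightarrow> B \<subseteq> S \<Longrightarrow> finite A \<Longrightarrow> finite B \<Longrightarrow> \<Sum>A = k + \<Sum>B \<Longrightarrow> k \<in> sum_diffs S"
  unfolding sum_diffs_def by blast

lemma sum_diffsE:
  assumes "k \<in> sum_diffs S"
  obtains A B where "A \<subseteq> S" "B \<subseteq> S" "finite A" "finite B" "\<Sum>A = k + \<Sum>B"
  using assms unfolding sum_diffs_def by blast

lemma sum_diffs_mono:
  assumes "S \<subseteq> T"
  shows "sum_diffs S \<subseteq> sum_diffs T"
proof
  fix k assume "k \<in> sum_diffs S"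
  then obtain A B where "A \<subseteq> S" "B \<subseteq> S" "finite A" "finite B" "\<Sum>A = k + \<Sum>B"
    by (rule sum_diffsE)
  with assms show "k \<in> sum_diffs T" by (intro sum_diffsI[of A T B]) auto
qed

lemma zero_in_sum_diffs: "0 \<in> sum_diffs S"
  by (rule sum_diffsI[of "{}" S "{}"]) auto

lemma subset_sum_diffs: "S \<subseteq> sum_diffs S"
proof
  fix x assume "x \<in> S"
  then show "x \<in> sum_diffs S" by (intro sum_diffsI[of "{x}" S "{}"]) auto
qed

lemma sum_diffs_le_sum:
  assumes "finite S" "k \<in> sum_diffs S"
  shows "k \<le> \<Sum>S"
proof -
  obtain A B where "A \<subseteq> S" "\<Sum>A = k + \<Sum>B"
    using assms(2) by (rule sum_diffsE)
  moreover have "\<Sum>A \<le> \<Sum>S" using assms(1) \<open>A \<subseteq> S\<close> by (simp add: sum_mono2)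
  ultimately show ?thesis by linarith
qed

lemma add_in_sum_diffs_insert:
  assumes "k \<in> sum_diffs S" "y \<notin> S"
  shows "k + y \<in> sum_diffs (insert y S)"
proof -
  obtain A B where AB: "A \<subseteq> S" "B \<subseteq> S" "finite A" "finite B" "\<Sum>A = k + \<Sum>B"
    using assms(1) by (rule sum_diffsE)
  moreover have "y \<notin> A" using AB(1) assms(2) by blast
  ultimately have "\<Sum>(insert y A) = (k + y) + \<Sum>B" by simp
  with AB show ?thesis by (intro sum_diffsI[of "insert y A" _ B]) auto
qed

lemma diff_in_sum_diffs_insert:
  assumes "k \<in> sum_diffs S" "k \<le> y" "y \<notin> S"
  shows "y - k \<in> sum_diffs (insert y S)"
proof -
  obtain A B where AB: "A \<subseteq> S" "B \<subseteq> S" "finite A" "finite B" "\<Sum>A = k + \<Sum>B"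
    using assms(1) by (rule sum_diffsE)
  moreover have "y \<notin> B" using AB(2) assms(3) by blast
  ultimately have "\<Sum>(insert y B) = (y - k) + \<Sum>A" using assms(2) by simp
  with AB show ?thesis by (intro sum_diffsI[of "insert y B" _ A]) auto
qed

lemma sum_split_singleton: "finite A \<Longrightarrow> \<Sum>A = \<Sum>(A - {y}) + (if y \<in> A then y else 0)"
  by (simp add: sum.remove add.commute)

lemma sum_diffs_insertE:
  assumes "k \<in> sum_diffs (insert y S)"
  shows "k \<in> sum_diffs S \<or> k + y \<in> sum_diffs S \<or> (y \<le> k \<and> k - y \<in> sum_diffs S)
    \<or> (k \<le> y \<and> y - k \<in> sum_diffs S)"
proof -
  obtain A B where AB: "A \<subseteq> insert y S" "B \<subseteq> insert y S" "finite A" "finite B" "\<Sum>A = k + \<Sum>B"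
    using assms by (rule sum_diffsE)
  let ?A = "A - {y}" and ?B = "B - {y}"
  have in_S: "?A \<subseteq> S" "?B \<subseteq> S" "finite ?A" "finite ?B" using AB(1-4) by auto
  have "\<Sum>A = \<Sum>?A + (if y \<in> A then y else 0)" "\<Sum>B = \<Sum>?B + (if y \<in> B then y else 0)"
    by (rule sum_split_singleton[OF AB(3)], rule sum_split_singleton[OF AB(4)])
  then have "\<Sum>?A = k + \<Sum>?B \<or> \<Sum>?A = (k + y) + \<Sum>?B
    \<or> (y \<le> k \<and> \<Sum>?A = (k - y) + \<Sum>?B) \<or> (k \<le> y \<and> \<Sum>?B = (y - k) + \<Sum>?A)"
    using AB(5) by (cases "y \<in> A"; cases "y \<in> B"; simp only: if_True if_False; arith)
  then show ?thesis
    using sum_diffsI[OF in_S, of k] sum_diffsI[OF in_S, of "k + y"] sum_diffsI[OF in_S, of "k - y"]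
      sum_diffsI[OF in_S(2,1,4,3), of "y - k"]
    by argo
qed

lemma dissociatedD:
  "dissociated S \<Longrightarrow> A \<subseteq> S \<Longrightarrow> B \<subseteq> S \<Longrightarrow> finite A \<Longrightarrow> finite B \<Longrightarrow> \<Sum>A = \<Sum>B \<Longrightarrow> A = B"
  unfolding dissociated_def by blast

lemma dissociated_insert_iff:
  assumes diss: "dissociated S" and "x \<notin> S"
  shows "dissociated (insert x S) \<longleftrightarrow> x \<notin> sum_diffs S"
proof
  assume diss_x: "dissociated (insert x S)"
  show "x \<notin> sum_diffs S"
  proof
    assume "x \<in> sum_diffs S"
    then obtain A B where AB: "A \<subseteq> S" "B \<subseteq> S" "finite A" "finite B" "\<Sum>A = x + \<Sum>B"
      by (rule sum_diffsE)
    moreover from AB(2) \<open>x \<notin> S\<close> have "x \<notin> B" by blast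
    ultimately have "\<Sum>A = \<Sum>(insert x B)" by simp
    with AB have "A = insert x B" by (intro dissociatedD[OF diss_x]) auto
    with AB(1) \<open>x \<notin> S\<close> show False by blast
  qed
next
  assume x_new: "x \<notin> sum_diffs S"
  show "dissociated (insert x S)"
    unfolding dissociated_def
  proof (intro allI impI)
    fix A B assume AB: "A \<subseteq> insert x S" "B \<subseteq> insert x S" "finite A" "finite B" "\<Sum>A = \<Sum>B"
    let ?A = "A - {x}" and ?B = "B - {x}"
    have in_S: "?A \<subseteq> S" "?B \<subseteq> S" "finite ?A" "finite ?B" using AB(1-4) by auto
    have eq: "\<Sum>?A + (if x \<in> A then x else 0) = \<Sum>?B + (if x \<in> B then x else 0)"
      using AB(5) sum_split_singleton[OF AB(3), of x] sum_split_singleton[OF AB(4), of x] by linarith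
    have same_x: "x \<in> A \<longleftrightarrow> x \<in> B"
    proof (rule ccontr)
      assume "\<not> ?thesis"
      then have "\<Sum>?A = x + \<Sum>?B \<or> \<Sum>?B = x + \<Sum>?A" using eq by (simp split: if_splits)
      then have "x \<in> sum_diffs S" using sum_diffsI[OF in_S, of x] sum_diffsI[OF in_S(2,1,4,3), of x] by argo
      with x_new show False ..
    qed
    with eq have "\<Sum>?A = \<Sum>?B" by (simp split: if_splits)
    with in_S have "?A = ?B" by (intro dissociatedD[OF diss])
    with same_x show "A = B" by blast
  qed
qed

lemma dissociated_insert_gt_sum:
  assumes "finite S" "dissociated S" "\<Sum>S < x"
  shows "dissociated (insert x S)"
proof -
  have "x \<notin> S" using assms(1,3) member_le_sum[of x S id] by fastforce
  moreover have "x \<notin> sum_diffs S" using assms(1,3) sum_diffs_le_sum by fastforce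
  ultimately show ?thesis using assms(2) dissociated_insert_iff by blast
qed

lemma sum_diffs_insert_doubles:
  assumes "{..<y} \<subseteq> sum_diffs S" "y \<notin> S"
  shows "{..<2 * y} \<subseteq> sum_diffs (insert y S)"
proof
  fix j assume "j \<in> {..<2 * y}"
  show "j \<in> sum_diffs (insert y S)"
  proof (cases "j < y")
    case True
    with assms(1) sum_diffs_mono[of S "insert y S"] show ?thesis by blast
  next
    case False
    with \<open>j \<in> {..<2 * y}\<close> assms(1) have "j - y \<in> sum_diffs S" by auto
    from add_in_sum_diffs_insert[OF this assms(2)] False show ?thesis by simp
  qed
qed

lemma double_notin_sum_diffs_insert:
  assumes "finite S" "y \<notin> sum_diffs S" "\<Sum>S < 2 * y"
  shows "2 * y \<notin> sum_diffs (insert y S)"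
proof
  assume "2 * y \<in> sum_diffs (insert y S)"
  with assms show False
    using sum_diffs_insertE[of "2 * y" y S] sum_diffs_le_sum[OF assms(1)] by fastforce
qed

definition greedy_set :: "nat \<Rightarrow> nat \<Rightarrow> nat \<Rightarrow> nat set" where
  "greedy_set a b k = set (greedy_list a b k)"

definition greedy_max :: "nat \<Rightarrow> nat \<Rightarrow> nat \<Rightarrow> nat" where
  "greedy_max a b k = last (greedy_list a b k)"

lemma greedy_list_Suc:
  "greedy_list a b (Suc k) = greedy_list a b k @
     [LEAST x. greedy_max a b k < x \<and> dissociated (insert x (greedy_set a b k))]"
  by (simp add: Let_def greedy_max_def greedy_set_def)

declare greedy_list.simps(2)[simp del]

lemma greedy_max_Suc:
  "greedy_max a b (Suc k) = (LEAST x. greedy_max a b k < x \<and> dissociated (insert x (greedy_set a b k)))"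
  by (simp add: greedy_list_Suc greedy_max_def)

lemma greedy_set_Suc: "greedy_set a b (Suc k) = insert (greedy_max a b (Suc k)) (greedy_set a b k)"
  by (simp add: greedy_list_Suc greedy_max_Suc greedy_set_def)

lemma finite_greedy_set [simp]: "finite (greedy_set a b k)"
  by (simp add: greedy_set_def)

lemma length_greedy_list: "length (greedy_list a b k) = k + 2"
  by (induction k) (simp_all add: greedy_list_Suc)

lemma greedy_max_in_greedy_set: "greedy_max a b k \<in> greedy_set a b k"
  unfolding greedy_max_def greedy_set_def
  using length_greedy_list[of a b k] by (intro last_in_set) auto

lemma nth_greedy_list_stable:
  "k \<le> m \<Longrightarrow> i < k + 2 \<Longrightarrow> greedy_list a b m ! i = greedy_list a b k ! i"
  by (induction m rule: dec_induct) (simp_all add: greedy_list_Suc nth_append length_greedy_list)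

lemma gamma_eq_greedy_max:
  assumes "2 \<le> r"
  shows "gamma a b r = greedy_max a b (r - 2)"
proof -
  have len: "length (greedy_list a b (r - 2)) = r" using assms length_greedy_list by simp
  have "gamma a b r = greedy_list a b (r - 2) ! (r - 1)"
    unfolding gamma_def using assms by (intro nth_greedy_list_stable) auto
  also have "\<dots> = greedy_max a b (r - 2)"
    unfolding greedy_max_def using assms len by (subst last_conv_nth) auto
  finally show ?thesis .
qed

lemma greedy_max_Suc_spec:
  assumes "dissociated (greedy_set a b k)"
  shows "greedy_max a b k < greedy_max a b (Suc k)"
    and "dissociated (insert (greedy_max a b (Suc k)) (greedy_set a b k))"
proof -
  let ?x = "\<Sum>(greedy_set a b k) + greedy_max a b k + 1"
  have "dissociated (insert ?x (greedy_set a b k))"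
    using assms by (intro dissociated_insert_gt_sum) auto
  then have "greedy_max a b k < ?x \<and> dissociated (insert ?x (greedy_set a b k))" by simp
  from LeastI[where P = "\<lambda>x. greedy_max a b k < x \<and> dissociated (insert x (greedy_set a b k))",
      OF this] show "greedy_max a b k < greedy_max a b (Suc k)"
    and "dissociated (insert (greedy_max a b (Suc k)) (greedy_set a b k))"
    unfolding greedy_max_Suc by simp_all
qed

locale greedy_sequence =
  fixes a b :: nat
  assumes pos: "0 < a" and less: "a < b"
begin

lemma dissociated_greedy_set: "dissociated (greedy_set a b k)"
proof (induction k)
  case 0
  have "dissociated {}" by (simp add: dissociated_def)
  with pos have "dissociated {a}" using dissociated_insert_gt_sum[of "{}" a] by simp
  with less have "dissociated (insert b {a})" by (intro dissociated_insert_gt_sum[of "{a}" b]) auto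
  then show ?case by (simp add: greedy_set_def insert_commute)
next
  case (Suc k)
  then show ?case using greedy_max_Suc_spec(2) by (simp add: greedy_set_Suc)
qed

lemma greedy_max_less_Suc: "greedy_max a b k < greedy_max a b (Suc k)"
  using greedy_max_Suc_spec(1)[OF dissociated_greedy_set] .

lemma greedy_max_ge: "k + b \<le> greedy_max a b k"
proof (induction k)
  case 0
  then show ?case by (simp add: greedy_max_def)
next
  case (Suc k)
  then show ?case using greedy_max_less_Suc[of k] by simp
qed

lemma le_greedy_max: "z \<in> greedy_set a b k \<Longrightarrow> z \<le> greedy_max a b k"
proof (induction k)
  case 0
  then show ?case using less by (auto simp: greedy_set_def greedy_max_def)
next
  case (Suc k)
  then show ?case using greedy_max_less_Suc[of k] by (auto simp: greedy_set_Suc)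
qed

lemma greedy_max_Suc_notin: "greedy_max a b (Suc k) \<notin> greedy_set a b k"
  using le_greedy_max greedy_max_less_Suc leD by blast

lemma greedy_max_Suc_notin_sum_diffs: "greedy_max a b (Suc k) \<notin> sum_diffs (greedy_set a b k)"
  using dissociated_insert_iff[OF dissociated_greedy_set greedy_max_Suc_notin]
    greedy_max_Suc_spec(2)[OF dissociated_greedy_set] by blast

lemma greedy_max_Suc_le:
  assumes "greedy_max a b k < x" "x \<notin> sum_diffs (greedy_set a b k)"
  shows "greedy_max a b (Suc k) \<le> x"
proof -
  have "x \<notin> greedy_set a b k" using assms(1) le_greedy_max leD by blast
  with assms(2) have "dissociated (insert x (greedy_set a b k))"
    using dissociated_insert_iff[OF dissociated_greedy_set] by blast
  with assms(1) show ?thesis unfolding greedy_max_Suc by (intro Least_le) simp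
qed

lemma gap_in_sum_diffs:
  "greedy_max a b k < j \<Longrightarrow> j < greedy_max a b (Suc k) \<Longrightarrow> j \<in> sum_diffs (greedy_set a b k)"
  using greedy_max_Suc_le[of k j] by (meson leD)

lemma atLeastLessThan_subset_sum_diffs:
  "{b..<greedy_max a b (Suc k)} \<subseteq> sum_diffs (greedy_set a b k)"
proof (induction k)
  case 0
  show ?case
  proof
    fix j assume j: "j \<in> {b..<greedy_max a b (Suc 0)}"
    show "j \<in> sum_diffs (greedy_set a b 0)"
    proof (cases "j = b")
      case True
      then have "j \<in> greedy_set a b 0" by (simp add: greedy_set_def)
      then show ?thesis using subset_sum_diffs by blast
    next
      case False
      with j show ?thesis by (intro gap_in_sum_diffs) (auto simp: greedy_max_def)
    qed
  qed
next
  case (Suc k)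
  let ?y = "greedy_max a b (Suc k)"
  show ?case
  proof
    fix j assume j: "j \<in> {b..<greedy_max a b (Suc (Suc k))}"
    consider "j < ?y" | "j = ?y" | "?y < j" by linarith
    then show "j \<in> sum_diffs (greedy_set a b (Suc k))"
    proof cases
      case 1
      with j Suc.IH have "j \<in> sum_diffs (greedy_set a b k)" by auto
      moreover have "greedy_set a b k \<subseteq> greedy_set a b (Suc k)" by (auto simp: greedy_set_Suc)
      ultimately show ?thesis using sum_diffs_mono by blast
    next
      case 2
      then show ?thesis using greedy_max_in_greedy_set subset_sum_diffs by blast
    next
      case 3
      with j show ?thesis by (intro gap_in_sum_diffs) auto
    qed
  qed
qed

lemma atMost_subset_sum_diffs:
  "{..greedy_max a b (Suc k) - b} \<subseteq> sum_diffs (greedy_set a b (Suc k))"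
proof
  fix j assume j: "j \<in> {..greedy_max a b (Suc k) - b}"
  let ?y = "greedy_max a b (Suc k)"
  show "j \<in> sum_diffs (greedy_set a b (Suc k))"
  proof (cases "j = 0")
    case True
    then show ?thesis by (simp add: zero_in_sum_diffs)
  next
    case False
    with j have "?y - j \<in> sum_diffs (greedy_set a b k)"
      using atLeastLessThan_subset_sum_diffs[of k] by auto
    from diff_in_sum_diffs_insert[OF this _ greedy_max_Suc_notin] j
    show ?thesis by (simp add: greedy_set_Suc)
  qed
qed

lemma lessThan_subset_sum_diffs_start:
  assumes "2 * b \<le> greedy_max a b (Suc k)"
  shows "{..<greedy_max a b (Suc (Suc k))} \<subseteq> sum_diffs (greedy_set a b (Suc k))"
proof
  fix j assume j: "j \<in> {..<greedy_max a b (Suc (Suc k))}"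
  show "j \<in> sum_diffs (greedy_set a b (Suc k))"
  proof (cases "j \<le> greedy_max a b (Suc k) - b")
    case True
    then show ?thesis using atMost_subset_sum_diffs by blast
  next
    case False
    with assms j have "j \<in> {b..<greedy_max a b (Suc (Suc k))}" by auto
    then show ?thesis using atLeastLessThan_subset_sum_diffs by blast
  qed
qed

lemma lessThan_subset_sum_diffs_step:
  assumes "{..<greedy_max a b (Suc k)} \<subseteq> sum_diffs (greedy_set a b k)"
  shows "2 * greedy_max a b (Suc k) \<le> greedy_max a b (Suc (Suc k))"
    and "{..<greedy_max a b (Suc (Suc k))} \<subseteq> sum_diffs (greedy_set a b (Suc k))"
proof -
  let ?y = "greedy_max a b (Suc k)"
  have doubles: "{..<2 * ?y} \<subseteq> sum_diffs (greedy_set a b (Suc k))"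
    using sum_diffs_insert_doubles[OF assms greedy_max_Suc_notin] by (simp add: greedy_set_Suc)
  then show "2 * ?y \<le> greedy_max a b (Suc (Suc k))"
    using greedy_max_Suc_notin_sum_diffs[of "Suc k"] by (force simp: not_le)
  have "0 < ?y" using greedy_max_ge[of "Suc k"] by simp
  show "{..<greedy_max a b (Suc (Suc k))} \<subseteq> sum_diffs (greedy_set a b (Suc k))"
  proof
    fix j assume j: "j \<in> {..<greedy_max a b (Suc (Suc k))}"
    show "j \<in> sum_diffs (greedy_set a b (Suc k))"
    proof (cases "j \<le> ?y")
      case True
      with \<open>0 < ?y\<close> doubles show ?thesis by auto
    next
      case False
      with j show ?thesis by (intro gap_in_sum_diffs) auto
    qed
  qed
qed

lemma lessThan_subset_sum_diffs:
  "Suc b \<le> k \<Longrightarrow> {..<greedy_max a b (Suc k)} \<subseteq> sum_diffs (greedy_set a b k)"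
proof (induction k rule: dec_induct)
  case base
  show ?case using greedy_max_ge[of "Suc b"] by (intro lessThan_subset_sum_diffs_start) simp
next
  case (step n)
  from step.IH show ?case by (rule lessThan_subset_sum_diffs_step(2))
qed

lemma double_le_greedy_max_Suc:
  "Suc (Suc b) \<le> m \<Longrightarrow> 2 * greedy_max a b m \<le> greedy_max a b (Suc m)"
  using lessThan_subset_sum_diffs_step(1)[OF lessThan_subset_sum_diffs, of "m - 1"]
  by (simp add: Suc_diff_Suc)

lemma sum_greedy_set_le:
  "Suc (Suc b) \<le> m \<Longrightarrow>
    \<Sum>(greedy_set a b m) \<le> \<Sum>(greedy_set a b (Suc (Suc b))) + greedy_max a b (Suc m)"
proof (induction m rule: dec_induct)
  case base
  then show ?case by simp
next
  case (step m)
  have "\<Sum>(greedy_set a b (Suc m)) = greedy_max a b (Suc m) + \<Sum>(greedy_set a b m)"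
    using greedy_max_Suc_notin by (simp add: greedy_set_Suc)
  with step double_le_greedy_max_Suc[of "Suc m"] show ?case by simp
qed

lemma greedy_max_doubles: "\<exists>N. \<forall>m \<ge> N. greedy_max a b (Suc m) = 2 * greedy_max a b m"
proof (intro exI allI impI)
  let ?C = "\<Sum>(greedy_set a b (Suc (Suc b)))"
  fix m assume m: "Suc (Suc (Suc b)) + ?C \<le> m"
  then obtain k where k: "m = Suc k" by (cases m) auto
  let ?y = "greedy_max a b (Suc k)"
  have y_big: "Suc k + b \<le> ?y" by (rule greedy_max_ge)
  have "\<Sum>(greedy_set a b k) < 2 * ?y"
    using sum_greedy_set_le[of k] y_big m k by simp
  then have "2 * ?y \<notin> sum_diffs (greedy_set a b (Suc k))"
    unfolding greedy_set_Suc
    by (intro double_notin_sum_diffs_insert greedy_max_Suc_notin_sum_diffs) simp_all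
  moreover have "?y < 2 * ?y" using y_big less by simp
  ultimately have "greedy_max a b (Suc (Suc k)) \<le> 2 * ?y" by (intro greedy_max_Suc_le)
  with double_le_greedy_max_Suc[of "Suc k"] m k show "greedy_max a b (Suc m) = 2 * greedy_max a b m"
    by simp
qed

end

theorem theorem3:
  fixes a b :: nat
  assumes "0 < a" and "a < b"
  shows "\<exists>n0 \<ge> 2. \<forall>n \<ge> n0. gamma a b n = 2 * gamma a b (n - 1)"
proof -
  interpret greedy_sequence a b using assms by unfold_locales
  obtain N where N: "\<And>m. N \<le> m \<Longrightarrow> greedy_max a b (Suc m) = 2 * greedy_max a b m"
    using greedy_max_doubles by blast
  show ?thesis
  proof (intro exI[of _ "N + 3"] conjI allI impI)
    fix n assume n: "N + 3 \<le> n"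
    then have "n - 2 = Suc (n - 3)" by simp
    with n have "gamma a b n = greedy_max a b (Suc (n - 3))" by (simp add: gamma_eq_greedy_max)
    also have "\<dots> = 2 * greedy_max a b (n - 3)" using N n by simp
    also have "greedy_max a b (n - 3) = gamma a b (n - 1)"
      using n by (simp add: gamma_eq_greedy_max numeral_3_eq_3)
    finally show "gamma a b n = 2 * gamma a b (n - 1)" .
  qed simp
qed

end
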